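(* Let $x_1,\dots,x_n\ge0$ be real numbers and $P_n(z)=(z-x_1)\cdots(z-x_n)$. Then $d_1\big(Z(P_n),Z(P_n')\cup\{0\}\big)=\frac1n\sum_{i=1}^n x_i$.
   Context: For a polynomial $P$, $Z(P)$ is the multiset of its zeros (with multiplicity); $Z(P_n')\cup\{0\}$ denotes the multiset of the $n-1$ critical points of $P_n$ together with one additional point $0$. For multisets $U=\{u_1,\dots,u_n\}$, $V=\{v_1,\dots,v_n\}$, $d_1(U,V)=\min_{\pi\in\mathfrak{S}_n}\sum_{i=1}^n|u_i-v_{\pi(i)}|$. *)

theory Defs
  imports "HOL-Computational_Algebra.Computational_Algebra" "HOL-Library.Multiset"
begin

text \<open>Z(P): multiset of complex zeros with multiplicity is the library's proots.
  d_1 distance between multisets of equal size n: minimum over permutations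
  pi of sum |u_i - v_(pi i)|.  We fix an enumeration us of U and range over all
  enumerations vs of V, which is exactly ranging over all permutations.\<close>

definition d1 :: "complex multiset \<Rightarrow> complex multiset \<Rightarrow> real" where
  "d1 U V = Min {(\<Sum>i<size U. cmod (us ! i - vs ! i)) | us vs.
                   mset us = U \<and> mset vs = V}"

end

theory Submission
  imports Defs "HOL-Combinatorics.Multiset_Permutations"
begin

text \<open>
  All zeros of \<open>P\<close> are real, and so are its critical points: by Rolle's theorem there is a
  critical point strictly between two consecutive distinct zeros, and a zero of multiplicity \<open>m\<close>
  is a critical point of multiplicity \<open>m - 1\<close>. Hence for every real \<open>t\<close> the number of critical
  points \<open>\<le> t\<close> is at least the number of zeros \<open>\<le> t\<close> minus one, and a degree count shows that
  these are all \<open>n - 1\<close> critical points. As the zeros are nonnegative, adding the point \<open>0\<close>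
  removes the \<open>- 1\<close>, so matching both multisets in decreasing order pairs every zero \<open>u\<close> with
  a point \<open>v \<le> u\<close>; this matching costs exactly \<open>\<Sum>Z(P) - \<Sum>Z(P')\<close>, and by the triangle
  inequality no matching costs less. Finally, comparing the subleading coefficients of \<open>P\<close>
  and \<open>P'\<close> (Vieta) gives \<open>n \<Sum>Z(P') = (n - 1) \<Sum>Z(P)\<close>, so the cost is \<open>\<Sum>Z(P) / n\<close>.
\<close>

subsection \<open>Vieta's formula for the sum of the roots\<close>

lemma lead_coeff_prod_mset_linear:
  fixes A :: "'a::idom multiset"
  shows "lead_coeff (\<Prod>a\<in>#A. [:-a, 1:]) = 1"
  by (induction A) (simp_all add: lead_coeff_mult del: mult_pCons_left)

lemma prod_mset_linear_nonzero:
  fixes A :: "'a::idom multiset"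
  shows "(\<Prod>a\<in>#A. [:-a, 1:]) \<noteq> 0"
  using lead_coeff_prod_mset_linear[of A] by auto

lemma proots_prod_mset_linear:
  fixes A :: "'a::idom multiset"
  shows "proots (\<Prod>a\<in>#A. [:-a, 1:]) = A"
  by (induction A) (simp_all add: proots_mult[OF _ prod_mset_linear_nonzero] del: mult_pCons_left)

lemma degree_prod_mset_linear:
  fixes A :: "'a::idom multiset"
  shows "degree (\<Prod>a\<in>#A. [:-a, 1:]) = size A"
  by (induction A) (simp_all add: degree_mult_eq[OF _ prod_mset_linear_nonzero] del: mult_pCons_left)

lemma coeff_prod_mset_linear_pred_size:
  fixes A :: "'a::idom multiset"
  assumes "A \<noteq> {#}"
  shows "coeff (\<Prod>a\<in>#A. [:-a, 1:]) (size A - 1) = - sum_mset A"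
  using assms
proof (induction A)
  case (add b A)
  let ?p = "\<Prod>a\<in>#A. [:-a, 1:]"
  have "(\<Prod>a\<in>#add_mset b A. [:-a, 1:]) = smult (-b) ?p + pCons 0 ?p"
    by (simp add: mult_pCons_left)
  moreover have "coeff ?p (size A) = 1"
    using lead_coeff_prod_mset_linear[of A] by (simp add: degree_prod_mset_linear)
  ultimately show ?case
    using add.IH by (cases "A = {#}") (auto simp: coeff_pCons split: nat.split)
qed simp

lemma coeff_pred_degree_complex:
  fixes p :: "complex poly"
  assumes "degree p \<ge> 1"
  shows "coeff p (degree p - 1) = - lead_coeff p * sum_mset (proots p)"
proof -
  have size: "size (proots p) = degree p" by (rule size_proots_complex)
  then have "proots p \<noteq> {#}" using assms by auto
  then have "coeff (\<Prod>z\<in>#proots p. [:-z, 1:]) (degree p - 1) = - sum_mset (proots p)"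
    using coeff_prod_mset_linear_pred_size[of "proots p"] by (simp add: size)
  then have "coeff (smult (lead_coeff p) (\<Prod>z\<in>#proots p. [:-z, 1:])) (degree p - 1) =
      - lead_coeff p * sum_mset (proots p)"
    by simp
  then show ?thesis by (simp only: complex_poly_decompose_multiset)
qed

lemma sum_proots_pderiv_complex:
  fixes p :: "complex poly"
  shows "of_nat (degree p) * sum_mset (proots (pderiv p)) =
         of_nat (degree p - 1) * sum_mset (proots p)"
proof (cases "degree p \<ge> 2")
  case False
  then have "degree (pderiv p) = 0" by (simp add: degree_pderiv)
  then obtain c where "pderiv p = [:c:]" by (metis degree_eq_zeroE)
  with False show ?thesis by (cases "degree p = 1") auto
next
  case True
  define m where "m = degree p - 2"
  have m: "degree p = Suc (Suc m)" using True by (simp add: m_def)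
  then have dp: "degree (pderiv p) = Suc m" by (simp add: degree_pderiv)
  have "lead_coeff p * (of_nat (Suc (Suc m)) * sum_mset (proots (pderiv p))) =
        - coeff (pderiv p) m"
    using coeff_pred_degree_complex[of "pderiv p"] by (simp add: dp m coeff_pderiv)
  also have "\<dots> = lead_coeff p * (of_nat (Suc m) * sum_mset (proots p))"
    using coeff_pred_degree_complex[of p] by (simp add: m coeff_pderiv)
  moreover have "lead_coeff p \<noteq> 0" using True by auto
  ultimately show ?thesis by (simp add: m)
qed

subsection \<open>Complexification of real polynomials\<close>

lemma map_poly_of_real_eq_0_iff [simp]:
  "map_poly of_real p = (0 :: 'a::real_field poly) \<longleftrightarrow> p = 0"
  by (rule map_poly_eq_0_iff) auto

lemma map_poly_of_real_mult:
  "map_poly of_real (p * q) = map_poly of_real p * (map_poly of_real q :: 'a::real_field poly)"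
  by (intro poly_eqI) (simp add: coeff_map_poly coeff_mult of_real_sum)

lemma map_poly_of_real_power:
  "map_poly of_real (p ^ k) = (map_poly of_real p :: 'a::real_field poly) ^ k"
  by (induction k) (simp_all add: map_poly_of_real_mult)

lemma map_poly_of_real_prod_mset:
  "map_poly of_real (\<Prod>a\<in>#A. f a) = (\<Prod>a\<in>#A. map_poly of_real (f a) :: 'a::real_field poly)"
  by (induction A) (simp_all add: map_poly_of_real_mult)

lemma map_poly_of_real_pderiv:
  "pderiv (map_poly of_real p :: 'a::real_field poly) = map_poly of_real (pderiv p)"
  by (intro poly_eqI) (simp add: coeff_map_poly coeff_pderiv)

lemma map_poly_of_real_linear: "map_poly of_real [:-a, 1:] = [:-of_real a, 1 :: 'a::real_field:]"
  by (simp add: map_poly_pCons)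

lemma order_le_order_map_of_real:
  assumes "r \<noteq> 0"
  shows "order a r \<le> order (of_real a) (map_poly (of_real :: real \<Rightarrow> complex) r)"
proof -
  obtain s where "r = [:-a, 1:] ^ order a r * s" by (metis order_1 dvdE)
  then have "map_poly of_real r = [:-of_real a, 1:] ^ order a r * map_poly (of_real :: real \<Rightarrow> complex) s"
    by (metis map_poly_of_real_mult map_poly_of_real_power map_poly_of_real_linear)
  then have "[:-of_real a, 1:] ^ order a r dvd map_poly (of_real :: real \<Rightarrow> complex) r"
    by simp
  then show ?thesis
    using assms by (simp add: order_divides)
qed

lemma proots_map_of_real:
  fixes r :: "real poly"
  assumes "size (proots r) = degree r"
  shows "proots (map_poly of_real r :: complex poly) = image_mset of_real (proots r)"
proof (cases "r = 0")
  case False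
  let ?R = "map_poly of_real r :: complex poly"
  have "?R \<noteq> 0" using False by simp
  have "image_mset of_real (proots r) \<subseteq># proots ?R"
  proof (rule mset_subset_eqI)
    fix z :: complex
    show "count (image_mset of_real (proots r)) z \<le> count (proots ?R) z"
    proof (cases "z \<in> range of_real")
      case True
      then obtain a where a: "z = of_real a" by auto
      have "count (image_mset of_real (proots r)) z = count (proots r) a"
      proof -
        have "count (image_mset of_real M) (of_real a :: complex) = count M a" for M
          by (induction M) auto
        then show ?thesis by (simp add: a)
      qed
      then show ?thesis
        using order_le_order_map_of_real[OF False, of a] False \<open>?R \<noteq> 0\<close> by (simp add: a)
    next
      case False
      then have "z \<notin># image_mset of_real (proots r)" by auto
      then have "count (image_mset of_real (proots r)) z = 0" by (simp only: not_in_iff)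
      then show ?thesis by simp
    qed
  qed
  moreover have "size (proots ?R) = size (image_mset of_real (proots r))"
    using assms by (simp add: size_proots_complex degree_map_poly)
  ultimately show ?thesis
    by (metis subset_mset.less_le mset_subset_size less_irrefl)
qed simp

subsection \<open>Interlacing of zeros and critical points\<close>

definition count_le :: "'a::linorder multiset \<Rightarrow> 'a \<Rightarrow> nat" where
  "count_le M t = size {#a \<in># M. a \<le> t#}"

lemma count_le_le_size: "count_le M t \<le> size M"
  by (simp add: count_le_def)

lemma count_le_mono: "s \<le> t \<Longrightarrow> count_le M s \<le> count_le M t"
  unfolding count_le_def by (induction M) auto

lemma count_le_add_mset [simp]:
  "count_le (add_mset a M) t = count_le M t + (if a \<le> t then 1 else 0)"
  by (simp add: count_le_def)

lemma count_le_eq_0: "(\<And>a. a \<in># M \<Longrightarrow> t < a) \<Longrightarrow> count_le M t = 0"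
  by (force simp: count_le_def filter_mset_eq_conv)

lemma count_le_eq_size_iff: "count_le M t = size M \<longleftrightarrow> (\<forall>a\<in>#M. a \<le> t)"
  unfolding count_le_def
  by (induction M) (auto, metis Suc_n_not_le_n size_filter_mset_lesseq)

lemma count_le_ge_count: "count M t \<le> count_le M t"
  unfolding count_le_def by (induction M) auto

lemma count_le_split:
  "s \<le> t \<Longrightarrow> count_le M t = count_le M s + size {#a \<in># M. s < a \<and> a \<le> t#}"
  unfolding count_le_def by (induction M) auto

lemma pderiv_nonzero_of_root:
  fixes q :: "'a::field_char_0 poly"
  assumes "q \<noteq> 0" and "poly q r = 0"
  shows "pderiv q \<noteq> 0"
proof
  assume "pderiv q = 0"
  then obtain c where "q = [:c:]" by (metis pderiv_iszero)
  with assms show False by simp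
qed

lemma count_proots_pderiv:
  fixes q :: "'a::field_char_0 poly"
  assumes "q \<noteq> 0" and "poly q r = 0"
  shows "count (proots q) r = count (proots (pderiv q)) r + 1"
  using order_pderiv[OF assms] pderiv_nonzero_of_root[OF assms] assms(1) by simp

lemma count_le_proots_pderiv_between_roots:
  fixes q :: "real poly"
  assumes "q \<noteq> 0" and "r' < r" and "poly q r' = 0" and "poly q r = 0"
  shows "count_le (proots (pderiv q)) r' + count (proots (pderiv q)) r + 1 \<le>
         count_le (proots (pderiv q)) r"
proof -
  let ?D = "proots (pderiv q)"
  obtain s where s: "r' < s" "s < r" "poly (pderiv q) s = 0"
    using poly_MVT[OF assms(2), of q] assms(3,4) by auto
  have "{#a \<in># ?D. a = s#} + {#a \<in># ?D. a = r#} \<subseteq># {#a \<in># ?D. r' < a \<and> a \<le> r#}"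
    using s by (intro mset_subset_eqI) auto
  then have "count ?D s + count ?D r \<le> size {#a \<in># ?D. r' < a \<and> a \<le> r#}"
    by (auto dest: size_mset_mono simp: filter_eq_replicate_mset)
  moreover have "count ?D s \<ge> 1"
    using s(3) pderiv_nonzero_of_root[OF assms(1,4)] by (simp add: order_root Suc_le_eq)
  ultimately show ?thesis
    using count_le_split[of r' r ?D] assms(2) by linarith
qed

lemma count_le_proots_pderiv_at_root:
  fixes q :: "real poly"
  assumes "q \<noteq> 0" and "r \<in># proots q"
  shows "count_le (proots q) r \<le> count_le (proots (pderiv q)) r + 1"
  using assms(2)
proof (induction "card {a \<in> set_mset (proots q). a < r}" arbitrary: r rule: less_induct)
  case less
  let ?R = "proots q" and ?D = "proots (pderiv q)"
  have root: "poly q r = 0" using less.prems assms(1) by simp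
  note count_r = count_proots_pderiv[OF assms(1) root]
  show ?case
  proof (cases "\<exists>a\<in>#?R. a < r")
    case False
    then have "{#a \<in># ?R. a \<le> r#} = {#a \<in># ?R. a = r#}"
      by (intro filter_mset_cong) auto
    then have "count_le ?R r = count ?R r"
      by (simp add: count_le_def count_conv_size_mset)
    with count_r count_le_ge_count[of ?D r] show ?thesis
      by linarith
  next
    case True
    define r' where "r' = Max {a \<in> set_mset ?R. a < r}"
    have "r' \<in> {a \<in> set_mset ?R. a < r}"
      unfolding r'_def using True by (intro Max_in) auto
    then have r': "r' \<in># ?R" "r' < r" by auto
    have "{a \<in> set_mset ?R. a < r'} \<subset> {a \<in> set_mset ?R. a < r}"
      using r' by auto
    then have "card {a \<in> set_mset ?R. a < r'} < card {a \<in> set_mset ?R. a < r}"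
      by (intro psubset_card_mono) auto
    with less.hyps r' have IH: "count_le ?R r' \<le> count_le ?D r' + 1"
      by simp
    have "a \<le> r'" if "a \<in># ?R" "a < r" for a
      unfolding r'_def using that by (intro Max_ge) auto
    then have "{#a \<in># ?R. r' < a \<and> a \<le> r#} = {#a \<in># ?R. a = r#}"
      using r'(2) by (intro filter_mset_cong) force+
    then have "count_le ?R r = count_le ?R r' + count ?R r"
      using count_le_split[of r' r ?R] r' by (simp add: count_conv_size_mset)
    moreover have "poly q r' = 0"
      using r'(1) assms(1) by simp
    ultimately show ?thesis
      using IH count_r count_le_proots_pderiv_between_roots[OF assms(1) r'(2) _ root] by linarith
  qed
qed

lemma count_le_proots_pderiv:
  fixes q :: "real poly"
  assumes "q \<noteq> 0"
  shows "count_le (proots q) t \<le> count_le (proots (pderiv q)) t + 1"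
proof (cases "\<exists>a\<in>#proots q. a \<le> t")
  case False
  then show ?thesis by (simp add: count_le_eq_0 not_le)
next
  case True
  define r where "r = Max {a \<in> set_mset (proots q). a \<le> t}"
  have "r \<in> {a \<in> set_mset (proots q). a \<le> t}"
    unfolding r_def using True by (intro Max_in) auto
  then have r: "r \<in># proots q" "r \<le> t" by auto
  have below_r: "a \<le> r" if "a \<in># proots q" "a \<le> t" for a
    unfolding r_def using that by (intro Max_ge) auto
  have "{#a \<in># proots q. r < a \<and> a \<le> t#} = {#}"
    by (auto dest: below_r)
  then have "count_le (proots q) t = count_le (proots q) r"
    using count_le_split[OF r(2)] by simp
  also have "\<dots> \<le> count_le (proots (pderiv q)) r + 1"
    using count_le_proots_pderiv_at_root[OF assms r(1)] .
  also have "\<dots> \<le> count_le (proots (pderiv q)) t + 1"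
    using count_le_mono[OF r(2)] by simp
  finally show ?thesis .
qed

lemma size_proots_pderiv_real_rooted:
  fixes q :: "real poly"
  assumes "size (proots q) = degree q"
  shows "size (proots (pderiv q)) = degree (pderiv q)"
proof (cases "q = 0")
  case False
  define t where "t = Max (set_mset (proots q))"
  have "\<forall>a\<in>#proots q. a \<le> t" by (simp add: t_def)
  then have "degree q = count_le (proots q) t"
    using assms count_le_eq_size_iff by metis
  also have "\<dots> \<le> size (proots (pderiv q)) + 1"
    using count_le_proots_pderiv[OF False, of t] count_le_le_size[of "proots (pderiv q)" t]
    by linarith
  finally have "degree (pderiv q) \<le> size (proots (pderiv q))"
    by (simp add: degree_pderiv)
  with size_proots_le[of "pderiv q"] show ?thesis by linarith
qed simp

subsection \<open>Optimal matchings\<close>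

lemma exists_pairing_of_count_le:
  fixes A B :: "'a::linorder multiset"
  assumes "size A = size B" and "\<And>t. count_le A t \<le> count_le B t"
  shows "\<exists>as bs. mset as = A \<and> mset bs = B \<and> list_all2 (\<lambda>a b. b \<le> a) as bs"
  using assms
proof (induction "size A" arbitrary: A B)
  case 0
  then show ?case by auto
next
  case (Suc k)
  then have "A \<noteq> {#}" "B \<noteq> {#}" by auto
  define a b where "a = Max_mset A" and "b = Max_mset B"
  have a: "a \<in># A" "\<forall>x\<in>#A. x \<le> a" using \<open>A \<noteq> {#}\<close> by (simp_all add: a_def)
  have b: "b \<in># B" "\<forall>x\<in>#B. x \<le> b" using \<open>B \<noteq> {#}\<close> by (simp_all add: b_def)
  have "size B \<le> count_le B a"
    using Suc.prems a(2) count_le_eq_size_iff[of A a] by metis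
  then have "\<forall>x\<in>#B. x \<le> a"
    using count_le_le_size[of B a] count_le_eq_size_iff[of B a] by simp
  then have "b \<le> a" using b(1) by blast
  obtain A' B' where A': "A = add_mset a A'" and B': "B = add_mset b B'"
    using a(1) b(1) by (metis insert_DiffM)
  have "count_le A' t \<le> count_le B' t" for t
  proof (cases "b \<le> t")
    case True
    then have "count_le B' t = size B'"
      using b(2) B' count_le_eq_size_iff[of B' t] by auto
    with Suc.prems(1) A' B' show ?thesis
      using count_le_le_size[of A' t] by simp
  next
    case False
    with Suc.prems(2)[of t] \<open>b \<le> a\<close> A' B' show ?thesis by simp
  qed
  moreover have "k = size A'" "size A' = size B'"
    using Suc.hyps(2) Suc.prems(1) A' B' by simp_all
  ultimately obtain as bs where "mset as = A'" "mset bs = B'" "list_all2 (\<lambda>a b. b \<le> a) as bs"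
    using Suc.hyps(1) by blast
  with A' B' \<open>b \<le> a\<close> show ?case
    by (intro exI[of _ "a # as"] exI[of _ "b # bs"]) simp
qed

lemma d1_eq_norm_sum_diff:
  assumes "size V = size U" and "mset us = U" and "mset vs = V"
    and "(\<Sum>i<size U. cmod (us ! i - vs ! i)) = cmod (sum_mset U - sum_mset V)"
  shows "d1 U V = cmod (sum_mset U - sum_mset V)"
  unfolding d1_def
proof (rule Min_eqI)
  have "{(\<Sum>i<size U. cmod (us ! i - vs ! i)) | us vs. mset us = U \<and> mset vs = V} \<subseteq>
        (\<lambda>(us, vs). \<Sum>i<size U. cmod (us ! i - vs ! i)) `
          (permutations_of_multiset U \<times> permutations_of_multiset V)"
    by (auto simp: permutations_of_multiset_def)
  then show "finite {(\<Sum>i<size U. cmod (us ! i - vs ! i)) | us vs. mset us = U \<and> mset vs = V}"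
    by (rule finite_subset) simp
next
  fix s assume "s \<in> {(\<Sum>i<size U. cmod (us ! i - vs ! i)) | us vs. mset us = U \<and> mset vs = V}"
  then obtain us' vs' where uv: "mset us' = U" "mset vs' = V"
    and s: "s = (\<Sum>i<size U. cmod (us' ! i - vs' ! i))" by blast
  have "length us' = size U" "length vs' = size U"
    using uv assms(1) by (metis size_mset)+
  then have "sum_mset U - sum_mset V = (\<Sum>i<size U. us' ! i - vs' ! i)"
    by (simp add: uv[symmetric] sum_mset_sum_list sum_list_sum_nth sum_subtractf atLeast0LessThan)
  then show "cmod (sum_mset U - sum_mset V) \<le> s"
    using s by (simp add: norm_sum)
qed (use assms(2,3) assms(4)[symmetric] in blast)

lemma sum_mset_image_of_real:
  "sum_mset (image_mset of_real M) = (of_real (sum_mset M) :: 'a::real_algebra_1)"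
  by (induction M) auto

lemma d1_of_real_eq_sum_diff:
  fixes A B :: "real multiset"
  assumes "size A = size B" and "\<And>t. count_le A t \<le> count_le B t"
  shows "d1 (image_mset of_real A) (image_mset of_real B) = sum_mset A - sum_mset B"
proof -
  obtain as bs where ab: "mset as = A" "mset bs = B" and pair: "list_all2 (\<lambda>a b. b \<le> a) as bs"
    using exists_pairing_of_count_le[OF assms] by blast
  have len: "length bs = length as" using pair by (simp add: list_all2_lengthD)
  have le: "bs ! i \<le> as ! i" if "i < length as" for i
    using pair that by (simp add: list_all2_conv_all_nth)
  have sum: "sum_mset A - sum_mset B = (\<Sum>i<length as. as ! i - bs ! i)"
    using len by (simp add: ab[symmetric] sum_mset_sum_list sum_list_sum_nth sum_subtractf atLeast0LessThan)
  have nonneg: "sum_mset A - sum_mset B \<ge> 0"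
    unfolding sum using le by (intro sum_nonneg) simp
  have "sum_mset (image_mset of_real A) - sum_mset (image_mset of_real B) =
        (of_real (sum_mset A - sum_mset B) :: complex)"
    by (simp add: sum_mset_image_of_real)
  then have norm: "cmod (sum_mset (image_mset of_real A) - sum_mset (image_mset of_real B)) =
        sum_mset A - sum_mset B"
    using nonneg by (simp only: norm_of_real abs_of_nonneg)
  have "(\<Sum>i<size A. cmod (map of_real as ! i - map of_real bs ! i)) = (\<Sum>i<length as. as ! i - bs ! i)"
    using len le by (intro sum.cong) (auto simp: ab[symmetric] simp flip: of_real_diff)
  then have "d1 (image_mset of_real A) (image_mset of_real B) =
        cmod (sum_mset (image_mset of_real A) - sum_mset (image_mset of_real B))"
    using assms(1) ab sum norm
    by (intro d1_eq_norm_sum_diff[where us = "map of_real as" and vs = "map of_real bs"]) auto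
  with norm show ?thesis by simp
qed

lemma sum_proots_pderiv_real_rooted:
  fixes q :: "real poly"
  assumes "size (proots q) = degree q"
  shows "real (degree q) * sum_mset (proots (pderiv q)) = real (degree q - 1) * sum_mset (proots q)"
proof -
  let ?Q = "map_poly of_real q :: complex poly"
  have "proots ?Q = image_mset of_real (proots q)"
    using proots_map_of_real[OF assms] .
  moreover have "proots (pderiv ?Q) = image_mset of_real (proots (pderiv q))"
    using proots_map_of_real[OF size_proots_pderiv_real_rooted[OF assms]]
    by (simp add: map_poly_of_real_pderiv)
  ultimately have "of_real (real (degree q) * sum_mset (proots (pderiv q))) =
      (of_real (real (degree q - 1) * sum_mset (proots q)) :: complex)"
    using sum_proots_pderiv_complex[of ?Q] by (simp add: degree_map_poly sum_mset_image_of_real)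
  then show ?thesis by (simp only: of_real_eq_iff)
qed

lemma d1_proots_pderiv_real_rooted_nonneg:
  fixes q :: "real poly"
  assumes real_rooted: "size (proots q) = degree q" and "degree q \<ge> 1"
    and nonneg: "\<And>a. a \<in># proots q \<Longrightarrow> a \<ge> 0"
  shows "d1 (proots (map_poly of_real q)) (proots (pderiv (map_poly of_real q)) + {#0#}) =
         sum_mset (proots q) / real (degree q)"
proof -
  define R C where "R = proots q" and "C = proots (pderiv q)"
  have "q \<noteq> 0" using assms(2) by auto
  have size_C: "size C = degree q - 1"
    using size_proots_pderiv_real_rooted[OF real_rooted] by (simp add: C_def degree_pderiv)
  have "count_le R t \<le> count_le (C + {#0#}) t" for t
  proof (cases "t < 0")
    case True
    then have "count_le R t = 0" using nonneg by (force simp: R_def intro: count_le_eq_0)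
    then show ?thesis by simp
  next
    case False
    then show ?thesis
      using count_le_proots_pderiv[OF \<open>q \<noteq> 0\<close>, of t] by (simp add: R_def C_def)
  qed
  then have "d1 (image_mset of_real R) (image_mset of_real (C + {#0#})) = sum_mset R - sum_mset C"
    using real_rooted size_C assms(2) by (subst d1_of_real_eq_sum_diff) (auto simp: R_def)
  moreover have "proots (map_poly of_real q) = image_mset (of_real :: real \<Rightarrow> complex) R"
    using proots_map_of_real[OF real_rooted] by (simp add: R_def)
  moreover have "proots (pderiv (map_poly of_real q)) + {#0#} =
      image_mset (of_real :: real \<Rightarrow> complex) (C + {#0#})"
    using proots_map_of_real[OF size_proots_pderiv_real_rooted[OF real_rooted]]
    by (simp add: C_def map_poly_of_real_pderiv)
  ultimately have "d1 (proots (map_poly of_real q)) (proots (pderiv (map_poly of_real q)) + {#0#}) =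
      sum_mset R - sum_mset C"
    by simp
  moreover have "real (degree q) * (sum_mset R - sum_mset C) = sum_mset R"
    using sum_proots_pderiv_real_rooted[OF real_rooted] assms(2)
    by (simp add: R_def C_def algebra_simps of_nat_diff)
  ultimately show ?thesis
    using assms(2) by (simp add: R_def eq_divide_eq mult.commute)
qed

theorem mainTheorem12:
  fixes n :: nat and x :: "nat \<Rightarrow> real" and P :: "complex poly"
  assumes "n \<ge> 1"
    and "\<And>i. i < n \<Longrightarrow> x i \<ge> 0"
    and "P = (\<Prod>i<n. [:- complex_of_real (x i), 1:])"
  shows "d1 (proots P) (proots (pderiv P) + {#0#}) = (\<Sum>i<n. x i) / real n"
proof -
  define X where "X = image_mset x (mset_set {..<n})"
  define q where "q = (\<Prod>a\<in>#X. [:-a, 1:])"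
  have "P = map_poly of_real q"
    by (simp add: assms(3) q_def X_def prod_unfold_prod_mset map_poly_of_real_prod_mset
        map_poly_of_real_linear image_mset.compositionality o_def)
  moreover have "proots q = X" "degree q = n"
    by (simp_all add: q_def proots_prod_mset_linear degree_prod_mset_linear X_def)
  moreover have "sum_mset X = (\<Sum>i<n. x i)" "size X = n"
    by (simp_all add: X_def sum_unfold_sum_mset)
  moreover have "\<And>a. a \<in># X \<Longrightarrow> a \<ge> 0"
    using assms(2) by (auto simp: X_def)
  ultimately show ?thesis
    using d1_proots_pderiv_real_rooted_nonneg[of q] assms(1) by simp
qed

end
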